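(* For every $\beta\in\mathbb{R}^d$, the population EM update satisfies $\|M(\beta)\|\le3\sqrt{\sigma^2+\|\beta^*\|^2}$.
   Context: Mixed linear regression with two symmetric components: $(X,Y)\in\mathbb{R}^d\times\mathbb{R}$ with $Y=Z\langle\beta^*,X\rangle+e$, where $X\sim N(0,I_d)$, $e\sim N(0,\sigma^2)$ with known $\sigma>0$, $Z$ uniform on $\{-1,+1\}$, and $X,e,Z$ independent. The population EM operator is $M(\beta)=\mathbb{E}[\tanh(\langle X,\beta\rangle Y/\sigma^2)\,YX]$, with $X\sim N(0,I_d)$, $Y|X\sim N(\langle X,\beta^*\rangle,\sigma^2)$. *)

theory Defs
  imports "HOL-Probability.Probability"
begin

definition std_gauss_vec_density :: "real ^ 'd \<Rightarrow> real" where
  "std_gauss_vec_density x = (\<Prod>i\<in>UNIV. normal_density 0 1 (x $ i))"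

text \<open>Population EM operator for symmetric two-component mixed linear regression:
  M(beta) = E[tanh(<X,beta> Y / sigma^2) Y X] with X ~ N(0,I_d) and
  Y | X ~ N(<X,beta_star>, sigma^2), written as an iterated Lebesgue (Bochner) integral.\<close>
definition EM_M :: "real \<Rightarrow> real ^ 'd \<Rightarrow> real ^ 'd \<Rightarrow> real ^ 'd" where
  "EM_M \<sigma> \<beta>s \<beta> =
     (\<integral>x. (std_gauss_vec_density x *
              (\<integral>y. normal_density (x \<bullet> \<beta>s) \<sigma> y * (tanh ((x \<bullet> \<beta>) * y / \<sigma>\<^sup>2) * y) \<partial>lborel))
            *\<^sub>R x \<partial>lborel)"

end

(* For fixed x, the inner integral g(x) is E[tanh(..) Y * Y] with Y ~ N(<x,beta*>, sigma^2);
   since |tanh| <= 1, |g(x)| <= E|Y| <= sqrt(sigma^2 + <x,beta*>^2).  For M = M(beta) we have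
   |M|^2 = E[g(X) <X,M>], and Cauchy-Schwarz with the Gaussian second moments
   E[sigma^2 + <X,beta*>^2] = sigma^2 + |beta*|^2 and E[<X,M>^2] = |M|^2 gives
   |M| <= sqrt(sigma^2 + |beta*|^2), which is even better than the constant 3. *)
theory Submission
  imports Defs
begin

lemma integral_sq_le_Cauchy_Schwarz:
  fixes \<phi> f g :: "'a \<Rightarrow> real"
  assumes [measurable]: "f \<in> borel_measurable M" "g \<in> borel_measurable M"
    and nonneg: "\<And>x. 0 \<le> f x" "\<And>x. 0 \<le> g x" "0 \<le> A" "0 \<le> B"
    and bound: "\<And>x. \<bar>\<phi> x\<bar> \<le> f x * g x"
    and f_sq: "(\<integral>\<^sup>+x. ennreal ((f x)\<^sup>2) \<partial>M) = ennreal A"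
    and g_sq: "(\<integral>\<^sup>+x. ennreal ((g x)\<^sup>2) \<partial>M) = ennreal B"
  shows "(integral\<^sup>L M \<phi>)\<^sup>2 \<le> A * B"
proof (cases "integrable M \<phi>")
  case False
  then show ?thesis using nonneg by (simp add: not_integrable_integral_eq)
next
  case True
  have "ennreal \<bar>integral\<^sup>L M \<phi>\<bar> \<le> (\<integral>\<^sup>+x. norm (\<phi> x) \<partial>M)"
    using integral_norm_bound_ennreal[OF True] by simp
  also have "\<dots> \<le> (\<integral>\<^sup>+x. ennreal (f x) * ennreal (g x) \<partial>M)"
  proof (intro nn_integral_mono)
    fix x
    show "ennreal (norm (\<phi> x)) \<le> ennreal (f x) * ennreal (g x)"
      using bound[of x] nonneg by (simp add: ennreal_leI flip: ennreal_mult)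
  qed
  finally have "ennreal \<bar>integral\<^sup>L M \<phi>\<bar> ^ 2 \<le> (\<integral>\<^sup>+x. ennreal (f x) * ennreal (g x) \<partial>M) ^ 2"
    by (rule power_mono) simp
  also have "\<dots> \<le> (\<integral>\<^sup>+x. ennreal (f x) ^ 2 \<partial>M) * (\<integral>\<^sup>+x. ennreal (g x) ^ 2 \<partial>M)"
    by (rule Cauchy_Schwarz_nn_integral) measurable
  also have "\<dots> = ennreal (A * B)"
    using f_sq g_sq nonneg by (simp add: ennreal_power ennreal_mult)
  finally show ?thesis
    using nonneg by (simp add: ennreal_power ennreal_le_iff)
qed

lemma has_bochner_integral_normal_affine_sq:
  fixes \<mu> \<sigma> u c :: real
  assumes "\<sigma> > 0"
  shows "has_bochner_integral lborel (\<lambda>y. normal_density \<mu> \<sigma> y * (u + c * y)\<^sup>2)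
           ((u + c * \<mu>)\<^sup>2 + c\<^sup>2 * \<sigma>\<^sup>2)"
proof -
  have mass: "has_bochner_integral lborel (\<lambda>y. normal_density \<mu> \<sigma> y) 1"
    using normal_moment_even[OF assms, where k=0 and \<mu>=\<mu>] by simp
  have mean: "has_bochner_integral lborel (\<lambda>y. normal_density \<mu> \<sigma> y * (y - \<mu>)) 0"
    using normal_moment_odd[OF assms, where k=0 and \<mu>=\<mu>] by simp
  have var: "has_bochner_integral lborel (\<lambda>y. normal_density \<mu> \<sigma> y * (y - \<mu>)\<^sup>2) (\<sigma>\<^sup>2)"
    using normal_moment_even[OF assms, where k=1 and \<mu>=\<mu>] by (simp add: power2_eq_square)
  have "has_bochner_integral lborel
      (\<lambda>y. (u + c * \<mu>)\<^sup>2 * normal_density \<mu> \<sigma> y + 2 * (u + c * \<mu>) * c * (normal_density \<mu> \<sigma> y * (y - \<mu>))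
            + c\<^sup>2 * (normal_density \<mu> \<sigma> y * (y - \<mu>)\<^sup>2))
      ((u + c * \<mu>)\<^sup>2 * 1 + 2 * (u + c * \<mu>) * c * 0 + c\<^sup>2 * \<sigma>\<^sup>2)"
    by (intro has_bochner_integral_add has_bochner_integral_mult_right mass mean var)
  then show ?thesis
    by (rule has_bochner_integral_cong[THEN iffD1, rotated -1]) (auto simp: power2_eq_square algebra_simps)
qed

lemma nn_integral_normal_affine_sq:
  fixes \<mu> \<sigma> u c :: real
  assumes "\<sigma> > 0"
  shows "(\<integral>\<^sup>+y. ennreal (normal_density \<mu> \<sigma> y * (u + c * y)\<^sup>2) \<partial>lborel)
           = ennreal ((u + c * \<mu>)\<^sup>2 + c\<^sup>2 * \<sigma>\<^sup>2)"
  using has_bochner_integral_normal_affine_sq[OF assms, of \<mu> u c]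
  by (subst nn_integral_eq_integral) (auto simp: has_bochner_integral_iff)

lemma abs_integral_normal_density_le:
  fixes h :: "real \<Rightarrow> real" and \<mu> \<sigma> :: real
  assumes "\<sigma> > 0" and h: "\<And>y. \<bar>h y\<bar> \<le> \<bar>y\<bar>"
  shows "\<bar>\<integral>y. normal_density \<mu> \<sigma> y * h y \<partial>lborel\<bar> \<le> sqrt (\<sigma>\<^sup>2 + \<mu>\<^sup>2)"
proof -
  let ?N = "normal_density \<mu> \<sigma>"
  have "(\<integral>y. ?N y * h y \<partial>lborel)\<^sup>2 \<le> 1 * (\<sigma>\<^sup>2 + \<mu>\<^sup>2)"
  proof (rule integral_sq_le_Cauchy_Schwarz[where f="\<lambda>y. sqrt (?N y)" and g="\<lambda>y. sqrt (?N y) * \<bar>y\<bar>"])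
    fix y
    have "\<bar>?N y * h y\<bar> \<le> ?N y * \<bar>y\<bar>"
      using h[of y] by (simp add: abs_mult mult_left_mono)
    also have "\<dots> = sqrt (?N y) * (sqrt (?N y) * \<bar>y\<bar>)"
      by (simp add: mult.assoc[symmetric])
    finally show "\<bar>?N y * h y\<bar> \<le> sqrt (?N y) * (sqrt (?N y) * \<bar>y\<bar>)" .
  next
    have "(\<integral>\<^sup>+y. ennreal ((sqrt (?N y))\<^sup>2) \<partial>lborel) = (\<integral>\<^sup>+y. ennreal (?N y * (1 + 0 * y)\<^sup>2) \<partial>lborel)"
      by simp
    then show "(\<integral>\<^sup>+y. ennreal ((sqrt (?N y))\<^sup>2) \<partial>lborel) = ennreal 1"
      using nn_integral_normal_affine_sq[OF \<open>\<sigma> > 0\<close>, of \<mu> 1 0] by simp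
  next
    have "(\<integral>\<^sup>+y. ennreal ((sqrt (?N y) * \<bar>y\<bar>)\<^sup>2) \<partial>lborel) = (\<integral>\<^sup>+y. ennreal (?N y * (0 + 1 * y)\<^sup>2) \<partial>lborel)"
      by (simp add: power_mult_distrib)
    then show "(\<integral>\<^sup>+y. ennreal ((sqrt (?N y) * \<bar>y\<bar>)\<^sup>2) \<partial>lborel) = ennreal (\<sigma>\<^sup>2 + \<mu>\<^sup>2)"
      using nn_integral_normal_affine_sq[OF \<open>\<sigma> > 0\<close>, of \<mu> 0 1] by (simp add: add.commute)
  next
    show "(\<lambda>y. sqrt (?N y)) \<in> borel_measurable lborel" by measurable
  next
    show "(\<lambda>y. sqrt (?N y) * \<bar>y\<bar>) \<in> borel_measurable lborel" by measurable
  qed simp_all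
  then show ?thesis
    by (metis mult_1 real_sqrt_abs real_sqrt_le_mono)
qed

lemma nn_integral_PiM_std_normal_affine_sq:
  fixes I :: "'i set" and a :: real and c :: "'i \<Rightarrow> real"
  assumes "finite I"
  shows "(\<integral>\<^sup>+f. ennreal ((\<Prod>i\<in>I. normal_density 0 1 (f i)) * (a + (\<Sum>i\<in>I. c i * f i))\<^sup>2)
           \<partial>PiM I (\<lambda>_. lborel)) = ennreal (a\<^sup>2 + (\<Sum>i\<in>I. (c i)\<^sup>2))"
  using assms
proof (induction I arbitrary: a c rule: finite_induct)
  case empty
  then show ?case by (simp add: PiM_empty nn_integral_count_space_finite)
next
  case (insert j A)
  interpret product_sigma_finite "\<lambda>_. lborel :: real measure" by standard
  let ?N = "normal_density 0 1"
  let ?P = "\<lambda>f. \<Prod>i\<in>A. ?N (f i)"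
  let ?S = "\<lambda>f. \<Sum>i\<in>A. c i * f i"
  let ?F = "\<lambda>f. (\<Prod>i\<in>insert j A. ?N (f i)) * (a + (\<Sum>i\<in>insert j A. c i * f i))\<^sup>2"
  have split: "?F (x(j:=y)) = ?P x * (?N y * (a + ?S x + c j * y)\<^sup>2)" for x y
  proof -
    have "(\<Prod>i\<in>A. ?N ((x(j:=y)) i)) = ?P x" "(\<Sum>i\<in>A. c i * (x(j:=y)) i) = ?S x"
      using insert by (auto intro!: prod.cong sum.cong)
    then show ?thesis
      using insert by (simp add: algebra_simps)
  qed
  \<comment> \<open>The second summand is the mass of the product density, the instance a = 1, c = 0 of the IH.\<close>
  have inner: "(\<integral>\<^sup>+y. ennreal (?P x * (?N y * (a + ?S x + c j * y)\<^sup>2)) \<partial>lborel)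
      = ennreal (?P x * (a + ?S x)\<^sup>2) + ennreal ((c j)\<^sup>2) * ennreal (?P x * (1 + (\<Sum>i\<in>A. 0 * x i))\<^sup>2)" for x
  proof -
    have P_nonneg: "0 \<le> ?P x" by (simp add: prod_nonneg)
    have "(\<integral>\<^sup>+y. ennreal (?P x * (?N y * (a + ?S x + c j * y)\<^sup>2)) \<partial>lborel)
        = ennreal (?P x) * (\<integral>\<^sup>+y. ennreal (?N y * (a + ?S x + c j * y)\<^sup>2) \<partial>lborel)"
      using P_nonneg by (simp add: ennreal_mult nn_integral_cmult)
    also have "\<dots> = ennreal (?P x * ((a + ?S x)\<^sup>2 + (c j)\<^sup>2))"
      using nn_integral_normal_affine_sq[of 1 0 "a + ?S x" "c j"] P_nonneg by (simp add: ennreal_mult)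
    finally show ?thesis
      using P_nonneg by (simp add: distrib_left ennreal_mult[symmetric] mult.commute)
  qed
  have "(\<integral>\<^sup>+f. ennreal (?F f) \<partial>PiM (insert j A) (\<lambda>_. lborel))
      = (\<integral>\<^sup>+x. (\<integral>\<^sup>+y. ennreal (?F (x(j:=y))) \<partial>lborel) \<partial>PiM A (\<lambda>_. lborel))"
    using insert by (subst product_nn_integral_insert) auto
  also have "\<dots> = (\<integral>\<^sup>+x. (\<integral>\<^sup>+y. ennreal (?P x * (?N y * (a + ?S x + c j * y)\<^sup>2)) \<partial>lborel) \<partial>PiM A (\<lambda>_. lborel))"
    by (simp only: split)
  also have "\<dots> = (\<integral>\<^sup>+x. ennreal (?P x * (a + ?S x)\<^sup>2)
                     + ennreal ((c j)\<^sup>2) * ennreal (?P x * (1 + (\<Sum>i\<in>A. 0 * x i))\<^sup>2) \<partial>PiM A (\<lambda>_. lborel))"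
    by (simp only: inner)
  also have "\<dots> = ennreal (a\<^sup>2 + (\<Sum>i\<in>A. (c i)\<^sup>2)) + ennreal ((c j)\<^sup>2) * ennreal (1\<^sup>2 + (\<Sum>i\<in>A. 0\<^sup>2))"
    using insert.IH[of a c] insert.IH[of 1 "\<lambda>_. 0"]
    by (subst nn_integral_add) (auto simp: nn_integral_cmult)
  also have "\<dots> = ennreal (a\<^sup>2 + (\<Sum>i\<in>insert j A. (c i)\<^sup>2))"
    using insert by (simp add: sum_nonneg flip: ennreal_plus)
  finally show ?case .
qed

lemma std_gauss_vec_density_nonneg: "0 \<le> std_gauss_vec_density x"
  by (simp add: std_gauss_vec_density_def prod_nonneg)

lemma borel_measurable_std_gauss_vec_density[measurable]:
  "std_gauss_vec_density \<in> borel_measurable (borel :: (real ^ 'd) measure)"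
  unfolding std_gauss_vec_density_def cart_eq_inner_axis by measurable

lemma nn_integral_std_gauss_vec_affine_sq:
  fixes v :: "real ^ 'd" and a :: real
  shows "(\<integral>\<^sup>+x. ennreal (std_gauss_vec_density x * (a + x \<bullet> v)\<^sup>2) \<partial>lborel) = ennreal (a\<^sup>2 + (norm v)\<^sup>2)"
proof -
  let ?T = "\<lambda>f. \<Sum>b\<in>(Basis :: (real ^ 'd) set). f b *\<^sub>R b"
  have Basis_vec: "(Basis :: (real ^ 'd) set) = range (\<lambda>i. axis i 1)"
    by (auto simp: Basis_vec_def)
  have coord: "?T f \<bullet> b = f b" if "b \<in> Basis" for f b
    using that by (simp add: inner_sum_left inner_Basis if_distrib cong: if_cong)
  have density: "std_gauss_vec_density (?T f) = (\<Prod>b\<in>Basis. normal_density 0 1 (f b))" for f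
  proof -
    have "std_gauss_vec_density (?T f) = (\<Prod>i\<in>UNIV. normal_density 0 1 (f (axis i 1)))"
      unfolding std_gauss_vec_density_def cart_eq_inner_axis
      by (intro prod.cong refl) (subst coord, auto simp: Basis_vec)
    also have "\<dots> = (\<Prod>b\<in>Basis. normal_density 0 1 (f b))"
      unfolding Basis_vec by (subst prod.reindex) (auto simp: inj_on_def axis_eq_axis)
    finally show ?thesis .
  qed
  have affine: "?T f \<bullet> v = (\<Sum>b\<in>Basis. (v \<bullet> b) * f b)" for f
    by (simp add: inner_sum_left inner_sum_right mult.commute inner_commute[of _ v])
  have "(\<integral>\<^sup>+x. ennreal (std_gauss_vec_density x * (a + x \<bullet> v)\<^sup>2) \<partial>lborel)
      = (\<integral>\<^sup>+f. ennreal (std_gauss_vec_density (?T f) * (a + ?T f \<bullet> v)\<^sup>2) \<partial>(\<Pi>\<^sub>M b\<in>Basis. lborel))"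
    by (subst lborel_eq) (simp add: nn_integral_distr)
  also have "\<dots> = (\<integral>\<^sup>+f. ennreal ((\<Prod>b\<in>Basis. normal_density 0 1 (f b)) * (a + (\<Sum>b\<in>Basis. (v \<bullet> b) * f b))\<^sup>2)
                     \<partial>(\<Pi>\<^sub>M b\<in>Basis. lborel))"
    by (simp only: density affine)
  also have "\<dots> = ennreal (a\<^sup>2 + (\<Sum>b\<in>Basis. (v \<bullet> b)\<^sup>2))"
    by (rule nn_integral_PiM_std_normal_affine_sq) simp
  also have "(\<Sum>b\<in>Basis. (v \<bullet> b)\<^sup>2) = (norm v)\<^sup>2"
    unfolding power2_norm_eq_inner by (subst euclidean_inner[of v v]) (simp add: power2_eq_square)
  finally show ?thesis .
qed

lemma norm_integral_std_gauss_vec_le: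
  fixes g :: "real ^ 'd \<Rightarrow> real" and a :: real and b :: "real ^ 'd"
  assumes g: "\<And>x. \<bar>g x\<bar> \<le> sqrt (a\<^sup>2 + (x \<bullet> b)\<^sup>2)"
  shows "norm (\<integral>x. (std_gauss_vec_density x * g x) *\<^sub>R x \<partial>lborel) \<le> sqrt (a\<^sup>2 + (norm b)\<^sup>2)"
proof -
  let ?p = "std_gauss_vec_density :: real ^ 'd \<Rightarrow> real"
  define F where "F x = (?p x * g x) *\<^sub>R x" for x
  define M where "M = integral\<^sup>L lborel F"
  have "((norm M)\<^sup>2)\<^sup>2 \<le> (a\<^sup>2 + (norm b)\<^sup>2) * (norm M)\<^sup>2"
  proof (cases "integrable lborel F")
    case False
    then show ?thesis by (simp add: M_def not_integrable_integral_eq)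
  next
    case True
    then have "(norm M)\<^sup>2 = (\<integral>x. F x \<bullet> M \<partial>lborel)"
      by (simp add: M_def power2_norm_eq_inner)
    also have "\<dots>\<^sup>2 \<le> (a\<^sup>2 + (norm b)\<^sup>2) * (norm M)\<^sup>2"
    proof (rule integral_sq_le_Cauchy_Schwarz[where f="\<lambda>x. sqrt (?p x) * sqrt (a\<^sup>2 + (x \<bullet> b)\<^sup>2)"
                                                  and g="\<lambda>x. sqrt (?p x) * \<bar>x \<bullet> M\<bar>"])
      fix x
      have "\<bar>F x \<bullet> M\<bar> = ?p x * (\<bar>g x\<bar> * \<bar>x \<bullet> M\<bar>)"
        by (simp add: F_def abs_mult std_gauss_vec_density_nonneg)
      also have "\<dots> \<le> ?p x * (sqrt (a\<^sup>2 + (x \<bullet> b)\<^sup>2) * \<bar>x \<bullet> M\<bar>)"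
        by (intro mult_left_mono mult_right_mono g std_gauss_vec_density_nonneg abs_ge_zero)
      also have "\<dots> = sqrt (?p x) * sqrt (a\<^sup>2 + (x \<bullet> b)\<^sup>2) * (sqrt (?p x) * \<bar>x \<bullet> M\<bar>)"
        by (simp add: std_gauss_vec_density_nonneg algebra_simps flip: mult.assoc)
      finally show "\<bar>F x \<bullet> M\<bar> \<le> sqrt (?p x) * sqrt (a\<^sup>2 + (x \<bullet> b)\<^sup>2) * (sqrt (?p x) * \<bar>x \<bullet> M\<bar>)" .
    next
      have "(\<integral>\<^sup>+x. ennreal ((sqrt (?p x) * sqrt (a\<^sup>2 + (x \<bullet> b)\<^sup>2))\<^sup>2) \<partial>lborel)
          = (\<integral>\<^sup>+x. ennreal (?p x * (a + x \<bullet> 0)\<^sup>2) + ennreal (?p x * (0 + x \<bullet> b)\<^sup>2) \<partial>lborel)"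
        by (intro nn_integral_cong)
           (simp add: power_mult_distrib std_gauss_vec_density_nonneg distrib_left flip: ennreal_plus)
      also have "\<dots> = (\<integral>\<^sup>+x. ennreal (?p x * (a + x \<bullet> 0)\<^sup>2) \<partial>lborel)
                       + (\<integral>\<^sup>+x. ennreal (?p x * (0 + x \<bullet> b)\<^sup>2) \<partial>lborel)"
        by (rule nn_integral_add) measurable
      also have "\<dots> = ennreal (a\<^sup>2 + (norm b)\<^sup>2)"
        by (simp only: nn_integral_std_gauss_vec_affine_sq) (simp flip: ennreal_plus)
      finally show "(\<integral>\<^sup>+x. ennreal ((sqrt (?p x) * sqrt (a\<^sup>2 + (x \<bullet> b)\<^sup>2))\<^sup>2) \<partial>lborel)
          = ennreal (a\<^sup>2 + (norm b)\<^sup>2)" .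
    next
      have "(\<integral>\<^sup>+x. ennreal ((sqrt (?p x) * \<bar>x \<bullet> M\<bar>)\<^sup>2) \<partial>lborel)
          = (\<integral>\<^sup>+x. ennreal (?p x * (0 + x \<bullet> M)\<^sup>2) \<partial>lborel)"
        by (simp add: power_mult_distrib std_gauss_vec_density_nonneg)
      also have "\<dots> = ennreal (0\<^sup>2 + (norm M)\<^sup>2)"
        by (rule nn_integral_std_gauss_vec_affine_sq)
      finally show "(\<integral>\<^sup>+x. ennreal ((sqrt (?p x) * \<bar>x \<bullet> M\<bar>)\<^sup>2) \<partial>lborel) = ennreal ((norm M)\<^sup>2)"
        by simp
    next
      show "(\<lambda>x. sqrt (?p x) * sqrt (a\<^sup>2 + (x \<bullet> b)\<^sup>2)) \<in> borel_measurable lborel" by measurable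
    next
      show "(\<lambda>x. sqrt (?p x) * \<bar>x \<bullet> M\<bar>) \<in> borel_measurable lborel" by measurable
    qed (simp_all add: std_gauss_vec_density_nonneg)
    finally show ?thesis .
  qed
  then have "(norm M)\<^sup>2 \<le> a\<^sup>2 + (norm b)\<^sup>2"
    by (cases "M = 0") (simp_all add: power2_eq_square)
  then show ?thesis
    unfolding M_def F_def by (rule real_le_rsqrt)
qed

theorem lemma22:
  fixes \<sigma> :: real and \<beta>s \<beta> :: "real ^ 'd"
  assumes "\<sigma> > 0"
  shows "norm (EM_M \<sigma> \<beta>s \<beta>) \<le> 3 * sqrt (\<sigma>\<^sup>2 + (norm \<beta>s)\<^sup>2)"
proof -
  have "norm (EM_M \<sigma> \<beta>s \<beta>) \<le> sqrt (\<sigma>\<^sup>2 + (norm \<beta>s)\<^sup>2)"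
    unfolding EM_M_def
  proof (rule norm_integral_std_gauss_vec_le)
    fix x :: "real ^ 'd"
    have "\<bar>tanh ((x \<bullet> \<beta>) * y / \<sigma>\<^sup>2) * y\<bar> \<le> \<bar>y\<bar>" for y
      using tanh_real_bounds[of "(x \<bullet> \<beta>) * y / \<sigma>\<^sup>2"] by (auto simp: abs_mult intro!: mult_left_le_one_le)
    then show "\<bar>\<integral>y. normal_density (x \<bullet> \<beta>s) \<sigma> y * (tanh ((x \<bullet> \<beta>) * y / \<sigma>\<^sup>2) * y) \<partial>lborel\<bar>
        \<le> sqrt (\<sigma>\<^sup>2 + (x \<bullet> \<beta>s)\<^sup>2)"
      by (rule abs_integral_normal_density_le[OF assms])
  qed
  moreover have "0 \<le> sqrt (\<sigma>\<^sup>2 + (norm \<beta>s)\<^sup>2)"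
    by simp
  ultimately show ?thesis
    by linarith
qed

end
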